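(* Let $n$ be a prime and let $g_1,g_2$ be two generators of $U(\mathbb Z/n\mathbb Z)$. Let $C$ be a circulant matrix of order $n$ and set $A=Q_{g_1}C$ and $B=Q_{g_2}C$ (a $g_1$-circulant and a $g_2$-circulant matrix, respectively). Then $A$ and $B$ have the same eigenvalues. In particular, if $g_1^{-1}$ denotes the inverse of $g_1$ modulo $n$, then $Q_{g_1}C$ and $Q_{g_1^{-1}}C$ have the same eigenvalues.
   Context: $Q_h$ is the $n\times n$ permutation matrix whose $(i,j)$ entry is $1$ if $j\equiv 1+(i-1)h\pmod n$ (indices in $\{1,\dots,n\}$) and $0$ otherwise. A circulant matrix $circ(c_1,\dots,c_n)$ has $(i,j)$ entry $c_{j-i+1}$ (subscripts mod $n$); an $h$-circulant matrix is one in which each row is the preceding row cyclically shifted $h$ places to the right. *)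

theory Defs
  imports "HOL-Number_Theory.Number_Theory" "Jordan_Normal_Form.Matrix" "Jordan_Normal_Form.Char_Poly"
begin

text \<open>Indices are 0-based: row/column i (0 \<le> i < n) corresponds to the paper's index i+1.
  The paper's condition j \<equiv> 1+(i-1)h (mod n) becomes j \<equiv> i*h (mod n).\<close>
definition Q_mat :: "nat \<Rightarrow> nat \<Rightarrow> complex mat" where
  "Q_mat n h = mat n n (\<lambda>(i,j). if j mod n = (i * h) mod n then 1 else 0)"

text \<open>circ(c_1,...,c_n): entry (i,j) is c_{j-i+1}; 0-based: c ((j - i) mod n).\<close>
definition circulant :: "nat \<Rightarrow> (nat \<Rightarrow> complex) \<Rightarrow> complex mat" where
  "circulant n c = mat n n (\<lambda>(i,j). c ((j + n - i) mod n))"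

definition eigenvalues :: "complex mat \<Rightarrow> complex set" where
  "eigenvalues A = {k. eigenvalue A k}"

end

theory Submission
  imports Defs
begin

(* The discrete Fourier transform diagonalises circ(c), with eigenvalues
   lambda_k = sum_m c_m w^(m k), w = exp(2 pi i / n).  As Q_h permutes the rows by
   i |-> i h, the transform of Q_h C v at frequency h k is lambda_k times that of v at k:
   in Fourier coordinates Q_h C is the weighted permutation moving coordinate k to
   position k h mod n with weight lambda_k.  Frequency 0 is fixed and gives the eigenvalue
   lambda_0.  For a primitive root h of the prime n, k |-> k h is a single cycle on the
   n - 1 nonzero residues, and the eigenvalues of a weighted m-cycle are the m-th roots of
   the product of its weights.  So the spectrum is {lambda_0} together with the roots of
   z^(n-1) = lambda_1 ... lambda_(n-1), independently of h; and the inverse of a primitive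
   root is again a primitive root. *)

section \<open>Roots of unity and residues modulo n\<close>

definition unity_root :: "nat \<Rightarrow> int \<Rightarrow> complex" where
  "unity_root n a = cis (2 * pi * of_int a / of_nat n)"

lemma unity_root_add: "unity_root n (a + b) = unity_root n a * unity_root n b"
  unfolding unity_root_def by (simp add: cis_mult add_divide_distrib distrib_left)

lemma unity_root_mult_nat: "unity_root n (int j * a) = unity_root n a ^ j"
  unfolding unity_root_def DeMoivre by (simp add: mult_ac)

lemma unity_root_multiple:
  assumes "n > 0"
  shows "unity_root n (int n * q) = 1"
proof -
  have "2 * pi * of_int (int n * q) / of_nat n = 2 * pi * of_int q"
    using assms by simp
  then show ?thesis
    unfolding unity_root_def by simp
qed

lemma unity_root_cong:
  assumes "n > 0" "[a = b] (mod int n)"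
  shows "unity_root n a = unity_root n b"
proof -
  obtain q where "a = b + int n * q"
    using assms(2) by (metis cong_iff_lin cong_sym)
  then show ?thesis
    by (simp add: unity_root_add unity_root_multiple[OF assms(1)])
qed

lemma unity_root_eq_1_iff:
  assumes "n > 0"
  shows "unity_root n a = 1 \<longleftrightarrow> int n dvd a"
proof
  assume "unity_root n a = 1"
  then have "cos (2 * pi * of_int a / of_nat n) = 1"
    unfolding unity_root_def by (metis cis.sel(1) one_complex.sel(1))
  then obtain k :: int where "2 * pi * of_int a / of_nat n = of_int k * 2 * pi"
    by (meson cos_one_2pi_int)
  then have "real_of_int a = of_int k * of_nat n"
    using assms by (simp add: field_simps)
  then show "int n dvd a"
    by (metis dvd_triv_right of_int_eq_iff of_int_mult of_int_of_nat_eq)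
qed (use assms unity_root_multiple in auto)

lemma sum_unity_root:
  assumes "n > 0"
  shows "(\<Sum>j<n. unity_root n (int j * a)) = (if int n dvd a then of_nat n else 0)"
proof (cases "int n dvd a")
  case True
  then have "unity_root n a = 1"
    using unity_root_eq_1_iff[OF assms] by simp
  with True show ?thesis
    by (simp add: unity_root_mult_nat)
next
  case False
  then have ne1: "unity_root n a \<noteq> 1"
    using unity_root_eq_1_iff[OF assms] by simp
  have "(\<Sum>j<n. unity_root n (int j * a)) = (unity_root n a ^ n - 1) / (unity_root n a - 1)"
    unfolding unity_root_mult_nat by (rule geometric_sum[OF ne1])
  also have "unity_root n a ^ n = 1"
    by (metis unity_root_mult_nat unity_root_multiple[OF assms] mult.commute power_one)
  finally show ?thesis
    using False by simp
qed

lemma sum_unity_root_diff: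
  assumes "j < n" "l < n"
  shows "(\<Sum>k<n. unity_root n (int k * (int j - int l))) = (if j = l then of_nat n else 0)"
proof -
  have "int n dvd int j - int l \<longleftrightarrow> j = l"
    using assms by (simp add: cong_iff_dvd_diff [symmetric] cong_int_iff cong_def)
  then show ?thesis
    using sum_unity_root[of n "int j - int l"] assms by simp
qed

lemma bij_betw_affine_mod:
  assumes "n > 0" "coprime b (int n)"
  shows "bij_betw (\<lambda>i. nat ((a + b * int i) mod int n)) {..<n} {..<n}"
proof -
  let ?f = "\<lambda>i. nat ((a + b * int i) mod int n)"
  have "inj_on ?f {..<n}"
  proof (rule inj_onI)
    fix x y assume "x \<in> {..<n}" "y \<in> {..<n}" "?f x = ?f y"
    then have "int (?f x) = int (?f y)"
      by simp
    then have "[a + b * int x = a + b * int y] (mod int n)"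
      using assms(1) by (simp add: cong_def)
    then have "[int x = int y] (mod int n)"
      using assms(2) cong_add_lcancel cong_mult_lcancel by blast
    with \<open>x \<in> {..<n}\<close> \<open>y \<in> {..<n}\<close> show "x = y"
      by (simp add: cong_int_iff cong_less_modulus_unique_nat)
  qed
  moreover have "?f ` {..<n} \<subseteq> {..<n}"
    using assms(1) by (auto simp: nat_less_iff)
  ultimately show ?thesis
    by (simp add: bij_betw_def endo_inj_surj)
qed

lemma sum_affine_mod_reindex:
  assumes "n > 0" "coprime b (int n)"
  shows "(\<Sum>i<n. f (nat ((a + b * int i) mod int n))) = (\<Sum>i<n. f i)"
  using sum.reindex_bij_betw[OF bij_betw_affine_mod[OF assms]] .

lemma bij_betw_mult_mod:
  fixes h :: nat
  assumes "n > 0" "coprime n h"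
  shows "bij_betw (\<lambda>k. k * h mod n) {..<n} {..<n}"
proof -
  have "nat ((0 + int h * int k) mod int n) = k * h mod n" for k
    by (simp add: mult.commute nat_mod_as_int)
  then show ?thesis
    using bij_betw_affine_mod[OF assms(1), of "int h" 0] assms(2) by (simp add: coprime_commute)
qed

lemma residue_primroot_inverse:
  fixes g g' :: nat
  assumes "residue_primroot n g" "[g * g' = 1] (mod n)"
  shows "residue_primroot n g'"
proof -
  define r where "r = ord n g"
  have cop: "coprime n g" and "r > 0"
    using assms(1) by (simp_all add: r_def residue_primroot_def)
  have "[g ^ (r - 1) * 1 = g ^ (r - 1) * (g * g')] (mod n)"
    using cong_mult[OF cong_refl cong_sym[OF assms(2)]] .
  also have "g ^ (r - 1) * (g * g') = g ^ r * g'"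
    using \<open>r > 0\<close> by (cases r) (simp_all add: mult_ac)
  also have "[g ^ r * g' = 1 * g'] (mod n)"
    unfolding r_def by (intro cong_mult ord cong_refl)
  finally have "[g' = g ^ (r - 1)] (mod n)"
    by (simp add: cong_sym_eq)
  then have "ord n g' = ord n (g ^ (r - 1))"
    by (rule ord_cong)
  also have "\<dots> = r div gcd (r - 1) r"
    unfolding r_def by (rule ord_power[OF cop])
  also have "\<dots> = r"
    using coprime_imp_gcd_eq_1[OF coprime_diff_one_left_nat[OF \<open>r > 0\<close>]] by simp
  finally have "ord n g' = ord n g"
    by (simp add: r_def)
  moreover from this \<open>r > 0\<close> have "coprime n g'"
    by (simp flip: ord_gt_0_iff add: r_def)
  ultimately show ?thesis
    using assms(1) by (simp add: residue_primroot_def)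
qed

section \<open>Eigenvalues of weighted permutations\<close>

(* z is an eigenvalue of the operator on functions S -> 'b that moves the value at k
   to sigma k and multiplies it by L k. *)
definition weighted_perm_eigenvalue :: "'a set \<Rightarrow> ('a \<Rightarrow> 'a) \<Rightarrow> ('a \<Rightarrow> 'b::field) \<Rightarrow> 'b \<Rightarrow> bool" where
  "weighted_perm_eigenvalue S \<sigma> L z \<longleftrightarrow> (\<exists>b. (\<exists>k\<in>S. b k \<noteq> 0) \<and> (\<forall>k\<in>S. z * b (\<sigma> k) = L k * b k))"

lemma weighted_perm_eigenvalue_cycleD:
  assumes "weighted_perm_eigenvalue {..<m} (\<lambda>i. Suc i mod m) L z"
  shows "z ^ m = (\<Prod>i<m. L i)"
proof -
  obtain \<beta> i0 where i0: "i0 < m" "\<beta> i0 \<noteq> 0"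
    and \<beta>: "\<forall>i<m. z * \<beta> (Suc i mod m) = L i * \<beta> i"
    using assms unfolding weighted_perm_eigenvalue_def by auto
  have iter: "z ^ j * \<beta> (j mod m) = (\<Prod>i<j. L i) * \<beta> 0" if "j \<le> m" for j
    using that
  proof (induction j)
    case (Suc j)
    then have "j < m"
      by simp
    have "z ^ Suc j * \<beta> (Suc j mod m) = z ^ j * (z * \<beta> (Suc j mod m))"
      by (simp add: mult_ac)
    also have "\<dots> = L j * (z ^ j * \<beta> (j mod m))"
      using \<beta> \<open>j < m\<close> by (simp add: mult_ac)
    also have "\<dots> = (\<Prod>i<Suc j. L i) * \<beta> 0"
      using Suc \<open>j < m\<close> by (simp add: mult_ac)
    finally show ?case .
  qed simp
  show ?thesis
  proof (cases "z = 0")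
    case True
    then have "L i0 = 0"
      using \<beta> i0 by auto
    with True i0 show ?thesis
      by (auto simp: zero_power)
  next
    case False
    have "\<beta> 0 \<noteq> 0"
    proof
      assume "\<beta> 0 = 0"
      then have "z ^ i0 * \<beta> i0 = 0"
        using iter[of i0] i0 by simp
      with False i0 show False
        by simp
    qed
    then show ?thesis
      using iter[of m] by simp
  qed
qed

lemma weighted_perm_eigenvalue_cycleI:
  assumes "m > 0" "z ^ m = (\<Prod>i<m. L i)"
  shows "weighted_perm_eigenvalue {..<m} (\<lambda>i. Suc i mod m) L z"
proof (cases "z = 0")
  case True
  then obtain i0 where "i0 < m" "L i0 = 0"
    using assms by (auto simp: zero_power)
  then show ?thesis
    unfolding weighted_perm_eigenvalue_def
    by (intro exI[of _ "\<lambda>i. if i = i0 then 1 else 0"]) (auto simp: True)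
next
  case False
  define \<beta> where "\<beta> j = (\<Prod>i<j. L i) / z ^ j" for j
  have "z * \<beta> (Suc i mod m) = L i * \<beta> i" if "i < m" for i
  proof (cases "Suc i < m")
    case True
    then show ?thesis
      using False by (simp add: \<beta>_def field_simps)
  next
    case last: False
    then have "m = Suc i"
      using that by simp
    then have "z ^ Suc i = L i * (\<Prod>k<i. L k)"
      using assms(2) by (simp add: mult.commute)
    then show ?thesis
      using \<open>m = Suc i\<close> False by (simp add: \<beta>_def field_simps)
  qed
  moreover have "\<beta> 0 \<noteq> 0"
    by (simp add: \<beta>_def)
  ultimately show ?thesis
    using assms(1) unfolding weighted_perm_eigenvalue_def by blast
qed

lemma weighted_perm_eigenvalue_cycle:
  "m > 0 \<Longrightarrow> weighted_perm_eigenvalue {..<m} (\<lambda>i. Suc i mod m) L z \<longleftrightarrow> z ^ m = (\<Prod>i<m. L i)"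
  using weighted_perm_eigenvalue_cycleD weighted_perm_eigenvalue_cycleI by blast

lemma weighted_perm_eigenvalue_conj:
  assumes p: "bij_betw p A B" and "\<forall>i\<in>A. \<sigma> i \<in> A" and "\<forall>i\<in>A. \<tau> (p i) = p (\<sigma> i)"
  shows "weighted_perm_eigenvalue B \<tau> L z \<longleftrightarrow> weighted_perm_eigenvalue A \<sigma> (L \<circ> p) z"
proof
  assume "weighted_perm_eigenvalue B \<tau> L z"
  then obtain b k where k: "k \<in> B" "b k \<noteq> 0" and b: "\<forall>k\<in>B. z * b (\<tau> k) = L k * b k"
    unfolding weighted_perm_eigenvalue_def by auto
  obtain i where "i \<in> A" "k = p i"
    using k(1) p by (auto simp: bij_betw_def)
  moreover have "\<forall>i\<in>A. z * b (p (\<sigma> i)) = L (p i) * b (p i)"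
    using b assms(3) bij_betw_apply[OF p] by metis
  ultimately show "weighted_perm_eigenvalue A \<sigma> (L \<circ> p) z"
    unfolding weighted_perm_eigenvalue_def by (intro exI[of _ "b \<circ> p"]) (use k in auto)
next
  assume "weighted_perm_eigenvalue A \<sigma> (L \<circ> p) z"
  then obtain \<beta> i0 where "i0 \<in> A" "\<beta> i0 \<noteq> 0" and \<beta>: "\<forall>i\<in>A. z * \<beta> (\<sigma> i) = L (p i) * \<beta> i"
    unfolding weighted_perm_eigenvalue_def by auto
  define q where "q = inv_into A p"
  have q: "q (p i) = i" if "i \<in> A" for i
    using p that by (simp add: q_def bij_betw_inv_into_left)
  have "\<forall>k\<in>B. z * \<beta> (q (\<tau> k)) = L k * \<beta> (q k)"
  proof
    fix k assume "k \<in> B"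
    then obtain i where "i \<in> A" "k = p i"
      using p by (auto simp: bij_betw_def)
    then show "z * \<beta> (q (\<tau> k)) = L k * \<beta> (q k)"
      using \<beta> q assms(2,3) by simp
  qed
  moreover have "p i0 \<in> B" "\<beta> (q (p i0)) \<noteq> 0"
    using \<open>i0 \<in> A\<close> \<open>\<beta> i0 \<noteq> 0\<close> q bij_betw_apply[OF p] by auto
  ultimately show "weighted_perm_eigenvalue B \<tau> L z"
    unfolding weighted_perm_eigenvalue_def by (intro exI[of _ "\<beta> \<circ> q"]) auto
qed

lemma weighted_perm_eigenvalue_insert_fixpoint:
  assumes "x \<notin> S" "\<sigma> x = x" "\<forall>k\<in>S. \<sigma> k \<in> S"
  shows "weighted_perm_eigenvalue (insert x S) \<sigma> L z \<longleftrightarrow> z = L x \<or> weighted_perm_eigenvalue S \<sigma> L z"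
proof
  assume "weighted_perm_eigenvalue (insert x S) \<sigma> L z"
  then obtain b k where k: "k \<in> insert x S" "b k \<noteq> 0"
    and b: "\<forall>k\<in>insert x S. z * b (\<sigma> k) = L k * b k"
    unfolding weighted_perm_eigenvalue_def by auto
  show "z = L x \<or> weighted_perm_eigenvalue S \<sigma> L z"
  proof (cases "b x = 0")
    case False
    then show ?thesis
      using b assms(2) by simp
  next
    case True
    with k have "k \<in> S"
      by auto
    with k b show ?thesis
      unfolding weighted_perm_eigenvalue_def by auto
  qed
next
  assume "z = L x \<or> weighted_perm_eigenvalue S \<sigma> L z"
  then show "weighted_perm_eigenvalue (insert x S) \<sigma> L z"
  proof
    assume "z = L x"
    then show ?thesis
      using assms unfolding weighted_perm_eigenvalue_def
      by (intro exI[of _ "\<lambda>k. if k = x then 1 else 0"]) (auto split: if_splits)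
  next
    assume "weighted_perm_eigenvalue S \<sigma> L z"
    then obtain b where "\<exists>k\<in>S. b k \<noteq> 0" "\<forall>k\<in>S. z * b (\<sigma> k) = L k * b k"
      unfolding weighted_perm_eigenvalue_def by auto
    then show ?thesis
      using assms unfolding weighted_perm_eigenvalue_def
      by (intro exI[of _ "b(x := 0)"]) fastforce
  qed
qed

lemma weighted_perm_eigenvalue_mult_primroot:
  fixes L :: "nat \<Rightarrow> 'b::field"
  assumes "prime n" "residue_primroot n h"
  shows "weighted_perm_eigenvalue {..<n} (\<lambda>k. k * h mod n) L z \<longleftrightarrow>
    z = L 0 \<or> z ^ (n - 1) = (\<Prod>k\<in>{1..<n}. L k)"
proof -
  have n1: "n > 1"
    using assms(1) prime_gt_1_nat by blast
  have cop: "coprime n h" and ord_h: "ord n h = n - 1"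
    using assms by (simp_all add: residue_primroot_def totient_prime)
  have gen: "bij_betw (\<lambda>i. h ^ i mod n) {..<n - 1} {1..<n}"
    using residue_primroot_is_generator[OF n1 assms(2)] assms(1)
    by (simp add: totient_prime totatives_prime atLeastSucLessThan_greaterThanLessThan)
  have closed: "\<forall>k\<in>{1..<n}. k * h mod n \<in> {1..<n}"
  proof
    fix k assume k: "k \<in> {1..<n}"
    have "k * h mod n \<noteq> 0 * h mod n"
      using inj_onD[OF bij_betw_imp_inj_on[OF bij_betw_mult_mod[OF _ cop]], where x = k and y = 0] n1 k
      by auto
    then show "k * h mod n \<in> {1..<n}"
      using n1 by simp
  qed
  have rotate: "\<forall>i\<in>{..<n - 1}. (h ^ i mod n) * h mod n = h ^ (Suc i mod (n - 1)) mod n"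
  proof
    fix i assume "i \<in> {..<n - 1}"
    have "(h ^ i mod n) * h mod n = h ^ Suc i mod n"
      by (metis mod_mult_left_eq power_Suc2)
    moreover have "h ^ (n - 1) mod n = 1"
      using ord[of h n] ord_h n1 by (simp add: cong_def)
    ultimately show "(h ^ i mod n) * h mod n = h ^ (Suc i mod (n - 1)) mod n"
      using \<open>i \<in> {..<n - 1}\<close> n1 by (cases "Suc i = n - 1") auto
  qed
  have "{..<n} = insert 0 {1..<n}"
    using n1 by auto
  then have "weighted_perm_eigenvalue {..<n} (\<lambda>k. k * h mod n) L z \<longleftrightarrow>
      z = L 0 \<or> weighted_perm_eigenvalue {1..<n} (\<lambda>k. k * h mod n) L z"
    using weighted_perm_eigenvalue_insert_fixpoint[OF _ _ closed, where x = 0] by simp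
  also have "weighted_perm_eigenvalue {1..<n} (\<lambda>k. k * h mod n) L z \<longleftrightarrow>
      weighted_perm_eigenvalue {..<n - 1} (\<lambda>i. Suc i mod (n - 1)) (\<lambda>i. L (h ^ i mod n)) z"
    using weighted_perm_eigenvalue_conj[OF gen _ rotate] n1 by (simp add: comp_def)
  also have "\<dots> \<longleftrightarrow> z ^ (n - 1) = (\<Prod>i<n - 1. L (h ^ i mod n))"
    using n1 by (simp add: weighted_perm_eigenvalue_cycle)
  also have "(\<Prod>i<n - 1. L (h ^ i mod n)) = (\<Prod>k\<in>{1..<n}. L k)"
    using prod.reindex_bij_betw[OF gen] .
  finally show ?thesis .
qed

section \<open>The discrete Fourier transform\<close>

definition dft :: "nat \<Rightarrow> complex vec \<Rightarrow> nat \<Rightarrow> complex" where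
  "dft n v k = (\<Sum>j<n. unity_root n (- (int j * int k)) * v $ j)"

definition idft :: "nat \<Rightarrow> (nat \<Rightarrow> complex) \<Rightarrow> complex vec" where
  "idft n a = vec n (\<lambda>j. \<Sum>k<n. unity_root n (int j * int k) * a k)"

definition circ_eigenvalue :: "nat \<Rightarrow> (nat \<Rightarrow> complex) \<Rightarrow> nat \<Rightarrow> complex" where
  "circ_eigenvalue n c k = (\<Sum>m<n. c m * unity_root n (int m * int k))"

lemma dft_mod:
  assumes "n > 0"
  shows "dft n v (k mod n) = dft n v k"
proof -
  have "[int j * int (k mod n) = int j * int k] (mod int n)" for j
    by (simp add: cong_def zmod_int mod_mult_right_eq)
  then have "unity_root n (- (int j * int (k mod n))) = unity_root n (- (int j * int k))" for j
    by (intro unity_root_cong[OF assms]) (simp add: cong_minus_minus_iff)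
  then show ?thesis
    unfolding dft_def by simp
qed

lemma dft_smult:
  assumes "v \<in> carrier_vec n"
  shows "dft n (z \<cdot>\<^sub>v v) k = z * dft n v k"
  using assms unfolding dft_def by (simp add: sum_distrib_left mult_ac)

lemma dft_inversion:
  assumes "v \<in> carrier_vec n" "j < n"
  shows "(\<Sum>k<n. unity_root n (int j * int k) * dft n v k) = of_nat n * v $ j"
proof -
  have "(\<Sum>k<n. unity_root n (int j * int k) * dft n v k) =
      (\<Sum>k<n. \<Sum>l<n. v $ l * unity_root n (int k * (int j - int l)))"
    unfolding dft_def sum_distrib_left
    by (intro sum.cong refl) (simp add: unity_root_add [symmetric] algebra_simps)
  also have "\<dots> = (\<Sum>l<n. v $ l * (\<Sum>k<n. unity_root n (int k * (int j - int l))))"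
    by (subst sum.swap) (simp add: sum_distrib_left)
  also have "\<dots> = (\<Sum>l<n. if j = l then of_nat n * v $ j else 0)"
    using assms(2) by (intro sum.cong refl) (simp add: sum_unity_root_diff)
  also have "\<dots> = of_nat n * v $ j"
    using assms(2) by simp
  finally show ?thesis .
qed

lemma dft_injective:
  assumes "v \<in> carrier_vec n" "w \<in> carrier_vec n" "\<forall>k<n. dft n v k = dft n w k"
  shows "v = w"
proof (rule eq_vecI)
  fix j assume "j < dim_vec w"
  then have "j < n"
    using assms(2) by simp
  moreover have "(\<Sum>k<n. unity_root n (int j * int k) * dft n v k) =
      (\<Sum>k<n. unity_root n (int j * int k) * dft n w k)"
    using assms(3) by simp
  ultimately have "of_nat n * v $ j = of_nat n * w $ j"
    using dft_inversion[OF assms(1)] dft_inversion[OF assms(2)] by simp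
  with \<open>j < n\<close> show "v $ j = w $ j"
    by simp
qed (use assms in simp)

lemma dft_idft:
  assumes "l < n"
  shows "dft n (idft n a) l = of_nat n * a l"
proof -
  have "dft n (idft n a) l = (\<Sum>j<n. \<Sum>k<n. a k * unity_root n (int j * (int k - int l)))"
    unfolding dft_def
  proof (intro sum.cong refl)
    fix j assume "j \<in> {..<n}"
    have "unity_root n (int j * (int k - int l)) =
        unity_root n (- (int j * int l)) * unity_root n (int j * int k)" for k
      by (simp add: unity_root_add [symmetric] algebra_simps)
    with \<open>j \<in> {..<n}\<close> show "unity_root n (- (int j * int l)) * idft n a $ j =
        (\<Sum>k<n. a k * unity_root n (int j * (int k - int l)))"
      by (simp add: idft_def sum_distrib_left mult_ac)
  qed
  also have "\<dots> = (\<Sum>k<n. a k * (\<Sum>j<n. unity_root n (int j * (int k - int l))))"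
    by (subst sum.swap) (simp add: sum_distrib_left)
  also have "\<dots> = (\<Sum>k<n. if k = l then of_nat n * a l else 0)"
    using assms by (intro sum.cong refl) (simp add: sum_unity_root_diff)
  also have "\<dots> = of_nat n * a l"
    using assms by simp
  finally show ?thesis .
qed

section \<open>The spectrum of Q_h C\<close>

lemma Q_circulant_carrier: "Q_mat n h * circulant n c \<in> carrier_mat n n"
  unfolding Q_mat_def circulant_def by (rule mult_carrier_mat) auto

lemma Q_circulant_entry:
  assumes "i < n" "j < n"
  shows "(Q_mat n h * circulant n c) $$ (i, j) = c (nat ((int j - int i * int h) mod int n))"
proof -
  have "(Q_mat n h * circulant n c) $$ (i, j) =
      (\<Sum>l<n. (if l = i * h mod n then 1 else 0) * c ((j + n - l) mod n))"
    using assms unfolding Q_mat_def circulant_def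
    by (simp add: scalar_prod_def lessThan_atLeast0 cong: if_cong)
  also have "\<dots> = (\<Sum>l<n. if l = i * h mod n then c ((j + n - l) mod n) else 0)"
    by (rule sum.cong) auto
  also have "\<dots> = c ((j + n - i * h mod n) mod n)"
    using assms by (simp add: sum.delta)
  also have "(j + n - i * h mod n) mod n = nat ((int j - int i * int h) mod int n)"
  proof -
    have "i * h mod n < n"
      using assms by simp
    then have "int ((j + n - i * h mod n) mod n) = (int j - int (i * h) mod int n + int n) mod int n"
      by (simp add: zmod_int algebra_simps)
    also have "\<dots> = (int j - int i * int h) mod int n"
      by (simp add: mod_diff_right_eq)
    finally show ?thesis
      by simp
  qed
  finally show ?thesis .
qed

lemma Q_circulant_mult_vec:
  assumes "v \<in> carrier_vec n" "i < n"
  shows "((Q_mat n h * circulant n c) *\<^sub>v v) $ i =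
    (\<Sum>j<n. c (nat ((int j - int i * int h) mod int n)) * v $ j)"
proof -
  have "((Q_mat n h * circulant n c) *\<^sub>v v) $ i =
      (\<Sum>j<n. (Q_mat n h * circulant n c) $$ (i, j) * v $ j)"
    using assms carrier_matD[OF Q_circulant_carrier] by (simp add: scalar_prod_def lessThan_atLeast0)
  then show ?thesis
    using assms(2) by (simp add: Q_circulant_entry)
qed

lemma sum_twisted_circulant_column:
  fixes h :: nat
  assumes "n > 0" "coprime n h"
  shows "(\<Sum>i<n. unity_root n (- (int i * int (h * k))) * c (nat ((int j - int i * int h) mod int n)))
    = unity_root n (- (int j * int k)) * circ_eigenvalue n c k"
proof -
  (* substitute m = (j - h i) mod n *)
  define g where "g m = c m * unity_root n ((int m - int j) * int k)" for m
  have "coprime (- int h) (int n)"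
    using assms(2) by (simp add: coprime_commute)
  have "unity_root n (- (int j * int k)) * circ_eigenvalue n c k = (\<Sum>m<n. g m)"
    unfolding circ_eigenvalue_def sum_distrib_left g_def
    by (intro sum.cong refl) (simp add: unity_root_add [symmetric] algebra_simps)
  also have "\<dots> = (\<Sum>i<n. g (nat ((int j + - int h * int i) mod int n)))"
    by (rule sum_affine_mod_reindex[OF assms(1) \<open>coprime (- int h) (int n)\<close>, symmetric])
  also have "\<dots> = (\<Sum>i<n. unity_root n (- (int i * int (h * k))) * c (nat ((int j - int i * int h) mod int n)))"
  proof (intro sum.cong refl)
    fix i
    have "[((int j - int h * int i) mod int n - int j) * int k = - (int i * int (h * k))] (mod int n)"
    proof -
      have "[((int j - int h * int i) mod int n - int j) * int k =
          (int j - int h * int i - int j) * int k] (mod int n)"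
        by (intro cong_mult cong_diff cong_refl) (simp add: cong_def)
      then show ?thesis
        by (simp add: algebra_simps)
    qed
    then show "g (nat ((int j + - int h * int i) mod int n)) =
        unity_root n (- (int i * int (h * k))) * c (nat ((int j - int i * int h) mod int n))"
      using assms(1) unfolding g_def by (simp add: unity_root_cong mult_ac)
  qed
  finally show ?thesis
    by (rule sym)
qed

lemma dft_Q_circulant:
  fixes h :: nat
  assumes "n > 0" "coprime n h" "v \<in> carrier_vec n"
  shows "dft n ((Q_mat n h * circulant n c) *\<^sub>v v) (h * k) = circ_eigenvalue n c k * dft n v k"
proof -
  have "dft n ((Q_mat n h * circulant n c) *\<^sub>v v) (h * k) =
      (\<Sum>i<n. \<Sum>j<n. unity_root n (- (int i * int (h * k))) *
        c (nat ((int j - int i * int h) mod int n)) * v $ j)"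
    unfolding dft_def
    by (intro sum.cong refl) (simp add: Q_circulant_mult_vec[OF assms(3)] sum_distrib_left mult_ac)
  also have "\<dots> = (\<Sum>j<n. (\<Sum>i<n. unity_root n (- (int i * int (h * k))) *
        c (nat ((int j - int i * int h) mod int n))) * v $ j)"
    by (subst sum.swap) (simp add: sum_distrib_right)
  also have "\<dots> = (\<Sum>j<n. unity_root n (- (int j * int k)) * circ_eigenvalue n c k * v $ j)"
    using sum_twisted_circulant_column[OF assms(1,2), where k = k and c = c] by simp
  also have "\<dots> = circ_eigenvalue n c k * dft n v k"
    unfolding dft_def by (simp add: sum_distrib_left mult_ac)
  finally show ?thesis .
qed

lemma weighted_perm_eigenvalue_if_eigenvalue_Q_circulant:
  fixes h :: nat
  assumes "n > 0" "coprime n h" "eigenvalue (Q_mat n h * circulant n c) z"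
  shows "weighted_perm_eigenvalue {..<n} (\<lambda>k. k * h mod n) (circ_eigenvalue n c) z"
proof -
  obtain v where v: "v \<in> carrier_vec n" "v \<noteq> 0\<^sub>v n" "(Q_mat n h * circulant n c) *\<^sub>v v = z \<cdot>\<^sub>v v"
    using assms(3) carrier_matD[OF Q_circulant_carrier] unfolding eigenvalue_def eigenvector_def by auto
  have "z * dft n v (k * h mod n) = circ_eigenvalue n c k * dft n v k" for k
  proof -
    have "z * dft n v (k * h mod n) = dft n (z \<cdot>\<^sub>v v) (h * k)"
      using dft_mod[OF assms(1)] dft_smult[OF v(1)] by (simp add: mult.commute)
    also have "\<dots> = circ_eigenvalue n c k * dft n v k"
      using dft_Q_circulant[OF assms(1,2) v(1), where c = c and k = k] v(3) by simp
    finally show ?thesis .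
  qed
  moreover have "\<exists>k\<in>{..<n}. dft n v k \<noteq> 0"
  proof (rule ccontr)
    assume "\<not> (\<exists>k\<in>{..<n}. dft n v k \<noteq> 0)"
    then have "v = 0\<^sub>v n"
      using dft_injective[OF v(1) zero_carrier_vec] by (simp add: dft_def)
    with v(2) show False ..
  qed
  ultimately show ?thesis
    unfolding weighted_perm_eigenvalue_def by blast
qed

lemma eigenvalue_Q_circulant_if_weighted_perm_eigenvalue:
  fixes h :: nat
  assumes "n > 0" "coprime n h"
    and "weighted_perm_eigenvalue {..<n} (\<lambda>k. k * h mod n) (circ_eigenvalue n c) z"
  shows "eigenvalue (Q_mat n h * circulant n c) z"
proof -
  obtain b l where l: "l < n" "b l \<noteq> 0"
    and b: "\<forall>k<n. z * b (k * h mod n) = circ_eigenvalue n c k * b k"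
    using assms(3) unfolding weighted_perm_eigenvalue_def by auto
  define v where "v = idft n b"
  have v: "v \<in> carrier_vec n"
    by (simp add: v_def idft_def)
  have "v \<noteq> 0\<^sub>v n"
  proof
    assume "v = 0\<^sub>v n"
    then have "dft n v l = 0"
      by (simp add: dft_def)
    with dft_idft[OF l(1)] l(2) assms(1) show False
      by (simp add: v_def)
  qed
  moreover have "(Q_mat n h * circulant n c) *\<^sub>v v = z \<cdot>\<^sub>v v"
  proof (rule dft_injective)
    show "\<forall>m<n. dft n ((Q_mat n h * circulant n c) *\<^sub>v v) m = dft n (z \<cdot>\<^sub>v v) m"
    proof (intro allI impI)
      fix m assume "m < n"
      then have "m \<in> (\<lambda>k. k * h mod n) ` {..<n}"
        using bij_betw_mult_mod[OF assms(1,2)] by (simp add: bij_betw_def)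
      then obtain k where k: "k < n" "m = k * h mod n"
        by auto
      have "dft n ((Q_mat n h * circulant n c) *\<^sub>v v) m =
          dft n ((Q_mat n h * circulant n c) *\<^sub>v v) (h * k)"
        using dft_mod[OF assms(1)] k(2) by (metis mult.commute)
      also have "\<dots> = circ_eigenvalue n c k * (of_nat n * b k)"
        using dft_Q_circulant[OF assms(1,2) v] dft_idft[OF k(1)] by (simp add: v_def)
      also have "\<dots> = of_nat n * (z * b m)"
        using b k by simp
      also have "\<dots> = dft n (z \<cdot>\<^sub>v v) m"
        using dft_smult[OF v] dft_idft[OF \<open>m < n\<close>] by (simp add: v_def)
      finally show "dft n ((Q_mat n h * circulant n c) *\<^sub>v v) m = dft n (z \<cdot>\<^sub>v v) m" .
    qed
  qed (use v mult_mat_vec_carrier[OF Q_circulant_carrier v] in auto)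
  ultimately show ?thesis
    unfolding eigenvalue_def eigenvector_def using v carrier_matD[OF Q_circulant_carrier] by auto
qed

lemma eigenvalue_Q_circulant_iff:
  fixes h :: nat
  assumes "n > 0" "coprime n h"
  shows "eigenvalue (Q_mat n h * circulant n c) z \<longleftrightarrow>
    weighted_perm_eigenvalue {..<n} (\<lambda>k. k * h mod n) (circ_eigenvalue n c) z"
  using weighted_perm_eigenvalue_if_eigenvalue_Q_circulant[OF assms]
    eigenvalue_Q_circulant_if_weighted_perm_eigenvalue[OF assms] by blast

lemma eigenvalues_Q_circulant_primroot:
  assumes "prime n" "residue_primroot n h"
  shows "eigenvalues (Q_mat n h * circulant n c) =
    insert (circ_eigenvalue n c 0) {z. z ^ (n - 1) = (\<Prod>k\<in>{1..<n}. circ_eigenvalue n c k)}"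
proof -
  have "n > 0" "coprime n h"
    using assms(2) by (simp_all add: residue_primroot_def)
  then have "eigenvalue (Q_mat n h * circulant n c) z \<longleftrightarrow>
      z = circ_eigenvalue n c 0 \<or> z ^ (n - 1) = (\<Prod>k\<in>{1..<n}. circ_eigenvalue n c k)" for z
    by (simp add: eigenvalue_Q_circulant_iff weighted_perm_eigenvalue_mult_primroot[OF assms])
  then show ?thesis
    unfolding eigenvalues_def by blast
qed

theorem mainTheorem7:
  fixes n g1 g2 :: nat and c :: "nat \<Rightarrow> complex"
  assumes "prime n"
    and "residue_primroot n g1"
    and "residue_primroot n g2"
  shows "eigenvalues (Q_mat n g1 * circulant n c) = eigenvalues (Q_mat n g2 * circulant n c)
    \<and> (\<forall>g1inv. [g1 * g1inv = 1] (mod n) \<longrightarrow>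
           eigenvalues (Q_mat n g1 * circulant n c) = eigenvalues (Q_mat n g1inv * circulant n c))"
  using eigenvalues_Q_circulant_primroot[OF assms(1)] assms(2,3) residue_primroot_inverse[OF assms(2)]
  by simp

end
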